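(* Let $\mathcal{X}$ be a convex subset of a normed space with norm $\|\cdot\|$ and dual norm $\|\cdot\|_*$, and $F:\mathcal{X}\times\mathcal{X}\to\mathbb{R}$ differentiable in its second argument such that for all $x,y,z\in\mathcal{X}$: $F(z,x)\ge F(z,y)+\langle\nabla_2F(z,y),x-y\rangle+\frac{\alpha}{2}\|x-y\|^2$; $|F(z,x)-F(z,y)|\le G_2\|x-y\|$; and $\|\nabla_2F(x,z)-\nabla_2F(y,z)\|_*\le\beta\|x-y\|$, where $\alpha>0$. Let $x_1\in\mathcal{X}$ and $x_{n+1}=\arg\min_{x\in\mathcal{X}}\sum_{k=1}^nF(x_k,x)$ for $n\ge1$. Let $\theta=\beta/\alpha$ and, for $n\ge2$, $S_n=\frac{1}{n-1}\sum_{k=1}^{n-1}\|x_n-x_k\|$. Then for all $n\ge2$, $\|x_{n+1}-x_n\|\le\frac{\theta S_n}{n}$.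
   Context: The iteration is the value aggregation algorithm AggreVaTe (Follow-the-Leader on the per-round costs $x\mapsto F(x_k,x)$); minimizers are assumed to exist. *)

theory Defs
  imports "HOL-Analysis.Analysis"
begin

end

theory Submission
  imports Defs
begin

text \<open>Write \<open>a = x n\<close>, \<open>b = x (n + 1)\<close> and \<open>c k = \<nabla>\<^sub>2F(x k, a)(a - b)\<close>. First-order optimality
of \<open>a\<close> for the first \<open>n - 1\<close> losses gives \<open>\<Sum>\<^sub>k\<^sub><\<^sub>n c k \<le> 0\<close>; optimality of \<open>b\<close> for the first \<open>n\<close>
losses, together with the monotonicity of strongly convex gradients, gives
\<open>n \<alpha> \<parallel>a - b\<parallel>\<^sup>2 \<le> \<Sum>\<^sub>k\<^sub>\<le>\<^sub>n c k\<close>. Hence the whole bound rests on the last term \<open>c n\<close>, and by the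
\<open>\<beta>\<close>-smoothness in the first argument \<open>c n - c k \<le> \<beta> \<parallel>x n - x k\<parallel> \<parallel>a - b\<parallel>\<close>; averaging over
\<open>k < n\<close> yields the claim.\<close>

lemma convex_minimizer_directional_derivative_nonneg:
  fixes f :: "'a::real_normed_vector \<Rightarrow> real"
  assumes "convex X" and "(f has_derivative f') (at y within X)"
    and "y \<in> X" and "z \<in> X" and min: "\<And>w. w \<in> X \<Longrightarrow> f y \<le> f w"
  shows "f' (z - y) \<ge> 0"
proof (rule ccontr)
  assume neg: "\<not> f' (z - y) \<ge> 0"
  define \<gamma> where "\<gamma> t = y + t *\<^sub>R (z - y)" for t :: real
  have \<gamma>_X: "\<gamma> ` {0..1} \<subseteq> X"
    using assms(1,3,4) by (auto simp: \<gamma>_def convex_alt algebra_simps)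
  have "(\<gamma> has_derivative (\<lambda>t. t *\<^sub>R (z - y))) (at 0 within {0..1})"
    unfolding \<gamma>_def by (auto intro!: derivative_eq_intros)
  moreover have "(f has_derivative f') (at (\<gamma> 0) within \<gamma> ` {0..1})"
    using assms(2) \<gamma>_X by (auto simp: \<gamma>_def intro: has_derivative_subset)
  ultimately have "((\<lambda>t. f (\<gamma> t)) has_derivative (\<lambda>t. f' (t *\<^sub>R (z - y)))) (at 0 within {0..1})"
    by (rule has_derivative_in_compose)
  moreover have "(\<lambda>t. f' (t *\<^sub>R (z - y))) = (*) (f' (z - y))"
    using linear_scale[OF has_derivative_linear[OF assms(2)]] by (simp add: fun_eq_iff mult.commute)
  ultimately have "((\<lambda>t. f (\<gamma> t)) has_real_derivative f' (z - y)) (at 0 within {0..1})"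
    by (simp add: has_field_derivative_def)
  then obtain d where "d > 0" and dec: "\<And>h. h > 0 \<Longrightarrow> 0 + h \<in> {0..1} \<Longrightarrow> h < d \<Longrightarrow> f (\<gamma> 0) > f (\<gamma> (0 + h))"
    using has_real_derivative_neg_dec_right neg by (metis not_le)
  then have "f (\<gamma> (min 1 (d/2))) < f y"
    by (simp add: \<gamma>_def)
  moreover have "\<gamma> (min 1 (d/2)) \<in> X" using \<gamma>_X \<open>d > 0\<close> by auto
  ultimately show False using min by (meson not_le)
qed

lemma ftl_step_inequality:
  fixes m :: nat and \<alpha> r S c B :: real
  assumes "m > 0" "\<alpha> > 0" "r \<ge> 0" "B \<ge> 0"
    and at_b: "(m + 1) * \<alpha> * r\<^sup>2 \<le> S + c"
    and at_a: "S \<le> 0"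
    and drift: "m * c - S \<le> B * r"
  shows "r \<le> B / (\<alpha> * m * (m + 1))"
proof -
  have "\<alpha> * m * (m + 1) * r * r \<le> m * (S + c)"
    using mult_left_mono[OF at_b, of m] by (simp add: power2_eq_square mult_ac)
  also have "\<dots> = (m + 1) * S + (m * c - S)" by (simp add: algebra_simps)
  also have "\<dots> \<le> B * r" using at_a drift by (smt (verit) mult_nonneg_nonpos of_nat_0_le_iff)
  finally have *: "(\<alpha> * m * (m + 1) * r) * r \<le> B * r" .
  have pos: "\<alpha> * m * (m + 1) > 0" using assms(1,2) by simp
  show ?thesis
  proof (cases "r = 0")
    case True then show ?thesis using pos \<open>B \<ge> 0\<close> by simp
  next
    case False
    then have "\<alpha> * m * (m + 1) * r \<le> B" using * \<open>r \<ge> 0\<close> by (simp add: mult_le_cancel_right)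
    then show ?thesis using pos by (simp add: pos_le_divide_eq mult.commute)
  qed
qed

locale follow_the_leader =
  fixes X :: "'a::real_normed_vector set"
    and F :: "'a \<Rightarrow> 'a \<Rightarrow> real"
    and D :: "'a \<Rightarrow> 'a \<Rightarrow> ('a \<Rightarrow>\<^sub>L real)"
    and x :: "nat \<Rightarrow> 'a"
    and \<alpha> \<beta> :: real
  assumes convex: "convex X"
    and deriv: "\<And>z y. z \<in> X \<Longrightarrow> y \<in> X \<Longrightarrow>
                  (F z has_derivative blinfun_apply (D z y)) (at y within X)"
    and strongly_convex: "\<And>x y z. x \<in> X \<Longrightarrow> y \<in> X \<Longrightarrow> z \<in> X \<Longrightarrow>
                  F z x \<ge> F z y + D z y (x - y) + \<alpha> / 2 * (norm (x - y))\<^sup>2"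
    and smooth: "\<And>x y z. x \<in> X \<Longrightarrow> y \<in> X \<Longrightarrow> z \<in> X \<Longrightarrow>
                  norm (D x z - D y z) \<le> \<beta> * norm (x - y)"
    and alpha_pos: "\<alpha> > 0"
    and first_in: "x 1 \<in> X"
    and next_in: "\<And>n. n \<ge> 1 \<Longrightarrow> x (Suc n) \<in> X"
    and next_min: "\<And>n y. n \<ge> 1 \<Longrightarrow> y \<in> X \<Longrightarrow>
                  (\<Sum>k=1..n. F (x k) (x (Suc n))) \<le> (\<Sum>k=1..n. F (x k) y)"
begin

lemma iterate_in: "k \<ge> 1 \<Longrightarrow> x k \<in> X"
  using first_in next_in by (cases k; cases "k - 1") auto

lemma iterate_first_order:
  assumes "m \<ge> 1" and "z \<in> X"
  shows "(\<Sum>k=1..m. D (x k) (x (Suc m)) (z - x (Suc m))) \<ge> 0"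
proof -
  have "((\<lambda>w. \<Sum>k=1..m. F (x k) w) has_derivative (\<lambda>h. \<Sum>k=1..m. D (x k) (x (Suc m)) h))
          (at (x (Suc m)) within X)"
    using deriv iterate_in next_in assms(1) by (intro has_derivative_sum) auto
  from convex_minimizer_directional_derivative_nonneg[OF convex this next_in] assms next_min
  show ?thesis by blast
qed

lemma gradient_monotone:
  assumes "a \<in> X" "b \<in> X" "z \<in> X"
  shows "D z a (a - b) - D z b (a - b) \<ge> \<alpha> * (norm (a - b))\<^sup>2"
proof -
  have "D z a (b - a) = - D z a (a - b)"
    by (metis blinfun.minus_right minus_diff_eq)
  with strongly_convex[of b a z] strongly_convex[of a b z] assms show ?thesis
    by (simp add: norm_minus_commute)
qed

lemma gradient_drift:
  assumes "u \<in> X" "v \<in> X" "a \<in> X"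
  shows "D u a h - D v a h \<le> \<beta> * norm (u - v) * norm h"
proof -
  have "D u a h - D v a h = (D u a - D v a) h" by (simp add: blinfun.diff_left)
  also have "\<dots> \<le> norm (D u a - D v a) * norm h"
    by (metis abs_ge_self norm_blinfun order_trans real_norm_def)
  also have "\<dots> \<le> \<beta> * norm (u - v) * norm h"
    using smooth[OF assms] by (simp add: mult_right_mono)
  finally show ?thesis .
qed

lemma smoothness_nonneg: "u \<in> X \<Longrightarrow> v \<in> X \<Longrightarrow> \<beta> * norm (u - v) \<ge> 0"
  using smooth[of u v u] norm_ge_zero order_trans by blast

lemma step_bound:
  assumes "m \<ge> 1"
  defines "a \<equiv> x (Suc m)" and "b \<equiv> x (Suc (Suc m))"
  shows "norm (a - b) \<le> \<beta> * (\<Sum>k=1..m. norm (a - x k)) / (\<alpha> * m * (m + 1))"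
proof -
  define c where "c k = D (x k) a (a - b)" for k
  have a_in: "a \<in> X" and b_in: "b \<in> X"
    using assms iterate_in next_in by auto
  have at_a: "(\<Sum>k=1..m. c k) \<le> 0"
  proof -
    have "D (x k) a (b - a) = - c k" for k
      unfolding c_def by (metis blinfun.minus_right minus_diff_eq)
    then show ?thesis
      using iterate_first_order[OF assms(1) b_in] by (simp add: a_def sum_negf)
  qed
  have at_b: "(m + 1) * \<alpha> * (norm (a - b))\<^sup>2 \<le> (\<Sum>k=1..m. c k) + c (Suc m)"
  proof -
    have "D (x k) b (a - b) + \<alpha> * (norm (a - b))\<^sup>2 - c k \<le> 0" if "k \<ge> 1" for k
      using gradient_monotone[OF a_in b_in iterate_in[OF that]] unfolding c_def by simp
    then have "(\<Sum>k=1..Suc m. D (x k) b (a - b) + \<alpha> * (norm (a - b))\<^sup>2 - c k) \<le> 0"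
      by (intro sum_nonpos) auto
    moreover have "(\<Sum>k=1..Suc m. D (x k) b (a - b)) \<ge> 0"
      using iterate_first_order[of "Suc m" a] a_in by (simp add: b_def)
    ultimately have "(Suc m) * (\<alpha> * (norm (a - b))\<^sup>2) \<le> (\<Sum>k=1..Suc m. c k)"
      by (simp only: sum.distrib sum_subtractf sum_constant card_atLeastAtMost) simp
    then show ?thesis by (simp add: mult.assoc)
  qed
  have drift: "m * c (Suc m) - (\<Sum>k=1..m. c k) \<le> \<beta> * (\<Sum>k=1..m. norm (a - x k)) * norm (a - b)"
  proof -
    have "m * c (Suc m) - (\<Sum>k=1..m. c k) = (\<Sum>k=1..m. c (Suc m) - c k)"
      by (simp add: sum_subtractf)
    also have "\<dots> \<le> (\<Sum>k=1..m. \<beta> * norm (a - x k) * norm (a - b))"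
      unfolding c_def a_def using gradient_drift a_in iterate_in a_def
      by (intro sum_mono) auto
    finally show ?thesis by (simp add: sum_distrib_left sum_distrib_right mult.assoc)
  qed
  have "\<beta> * (\<Sum>k=1..m. norm (a - x k)) \<ge> 0"
    unfolding sum_distrib_left using smoothness_nonneg a_in iterate_in by (intro sum_nonneg) auto
  with ftl_step_inequality[OF _ alpha_pos norm_ge_zero this at_b at_a] drift assms(1)
  show ?thesis by (simp add: mult.assoc)
qed

end

theorem lemma2:
  fixes X :: "'a::real_normed_vector set"
    and F :: "'a \<Rightarrow> 'a \<Rightarrow> real"
    and D :: "'a \<Rightarrow> 'a \<Rightarrow> ('a \<Rightarrow>\<^sub>L real)"
    and x :: "nat \<Rightarrow> 'a"
    and \<alpha> \<beta> G\<^sub>2 :: real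
  assumes convX: "convex X"
    and deriv: "\<And>z y. z \<in> X \<Longrightarrow> y \<in> X \<Longrightarrow>
                  (F z has_derivative blinfun_apply (D z y)) (at y within X)"
    and strong: "\<And>x y z. x \<in> X \<Longrightarrow> y \<in> X \<Longrightarrow> z \<in> X \<Longrightarrow>
                  F z x \<ge> F z y + D z y (x - y) + \<alpha> / 2 * (norm (x - y))\<^sup>2"
    and lip: "\<And>x y z. x \<in> X \<Longrightarrow> y \<in> X \<Longrightarrow> z \<in> X \<Longrightarrow>
                  \<bar>F z x - F z y\<bar> \<le> G\<^sub>2 * norm (x - y)"
    and smooth: "\<And>x y z. x \<in> X \<Longrightarrow> y \<in> X \<Longrightarrow> z \<in> X \<Longrightarrow>
                  norm (D x z - D y z) \<le> \<beta> * norm (x - y)"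
    and alpha_pos: "\<alpha> > 0"
    and x1: "x 1 \<in> X"
    and xmem: "\<And>n. n \<ge> 1 \<Longrightarrow> x (Suc n) \<in> X"
    and xmin: "\<And>n y. n \<ge> 1 \<Longrightarrow> y \<in> X \<Longrightarrow>
                  (\<Sum>k=1..n. F (x k) (x (Suc n))) \<le> (\<Sum>k=1..n. F (x k) y)"
  shows "\<forall>n\<ge>2. norm (x (Suc n) - x n)
           \<le> (\<beta> / \<alpha>) * ((1 / real (n - 1)) * (\<Sum>k=1..n-1. norm (x n - x k))) / real n"
proof (intro allI impI)
  fix n :: nat
  assume "n \<ge> 2"
  then obtain m where n: "n = Suc m" and "m \<ge> 1" by (cases n) auto
  interpret follow_the_leader X F D x \<alpha> \<beta>
    using assms by unfold_locales auto
  from step_bound[OF \<open>m \<ge> 1\<close>]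
  show "norm (x (Suc n) - x n)
          \<le> (\<beta> / \<alpha>) * ((1 / real (n - 1)) * (\<Sum>k=1..n-1. norm (x n - x k))) / real n"
    by (simp add: n norm_minus_commute field_simps)
qed

end
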